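(* Let $m,a,b,t\in\mathbb{N}$ with $m\geq 3$, $a\geq 1$, $t\in\{2,\ldots,m-1\}$ and $(t-1)(am+1)<bm+t<t(am+1)$, and let $S=\langle m,\ am+1,\ bm+t\rangle$ (a MANS-semigroup with embedding dimension $3$). Then $S$ is pseudo-symmetric if and only if $t=\frac{m+1}{2}$ and $t=\frac{b+1}{a}$.
   Context: $\mathbb{N}=\{0,1,2,\ldots\}$. $\langle A\rangle$ is the submonoid of $(\mathbb{N},+)$ generated by $A$; a numerical semigroup is a submonoid of $\mathbb{N}$ with finite complement. $\mathrm{F}(S)$ is the largest integer not in $S$. A numerical semigroup is irreducible if it cannot be expressed as the intersection of two numerical semigroups properly containing it; it is pseudo-symmetric if it is irreducible and $\mathrm{F}(S)$ is even. A MANS-semigroup is a numerical semigroup with $w(1)<\cdots<w(\mathrm{m}(S)-1)$, where $\mathrm{m}(S)$ is the least element of $S\setminus\{0\}$ and $w(i)$ the least element of $S$ congruent to $i$ modulo $\mathrm{m}(S)$. *)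

theory Defs
  imports Complex_Main
begin

inductive_set generated :: "nat set \<Rightarrow> nat set" for A :: "nat set" where
  gen_zero: "0 \<in> generated A"
| gen_add: "x \<in> A \<Longrightarrow> y \<in> generated A \<Longrightarrow> x + y \<in> generated A"

definition submonoid :: "nat set \<Rightarrow> bool" where
  "submonoid S \<longleftrightarrow> 0 \<in> S \<and> (\<forall>x\<in>S. \<forall>y\<in>S. x + y \<in> S)"

definition numerical_semigroup :: "nat set \<Rightarrow> bool" where
  "numerical_semigroup S \<longleftrightarrow> submonoid S \<and> finite (UNIV - S)"

definition frobenius :: "nat set \<Rightarrow> int" where
  "frobenius S = (if UNIV - S = {} then -1 else int (Max (UNIV - S)))"

definition irreducible_ns :: "nat set \<Rightarrow> bool" where
  "irreducible_ns S \<longleftrightarrow> numerical_semigroup S \<and>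
     \<not> (\<exists>T1 T2. numerical_semigroup T1 \<and> numerical_semigroup T2 \<and>
               S \<subset> T1 \<and> S \<subset> T2 \<and> S = T1 \<inter> T2)"

definition pseudo_symmetric :: "nat set \<Rightarrow> bool" where
  "pseudo_symmetric S \<longleftrightarrow> irreducible_ns S \<and> even (frobenius S)"

end

theory Submission
  imports Defs
begin

text \<open>
  Write the Apery element of residue \<open>i\<close> modulo \<open>m\<close> as \<open>w(i) = m K(i) + i\<close>.
  For \<open>S = \<langle>m, am + 1, bm + t\<rangle>\<close> one has \<open>w(i) = (i div t)(bm + t) + (i mod t)(am + 1)\<close>,
  so \<open>K(i) = (i div t) b + (i mod t) a\<close>, which is monotone; hence \<open>F(S) = w(m - 1) - m\<close>.
  The classical criterion (\<open>S\<close> is irreducible iff every gap \<open>x\<close> with \<open>2x \<noteq> F\<close> has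
  \<open>F - x \<in> S\<close>) becomes \<open>K(i) + K(m - 1 - i) \<le> K(m - 1)\<close> for all residues \<open>i\<close>,
  except possibly the middle one, where \<open>2 K(i) = K(m - 1) + 1\<close>.
  If \<open>t\<close> divides \<open>m\<close> then \<open>F\<close> is odd. Otherwise the residue \<open>i = (m - 1) mod t + 1\<close>
  violates the inequality, so it must be the middle one, and this forces \<open>m = 2t - 1\<close> and
  \<open>ta = b + 1\<close>; conversely, these two equations make every inequality hold.
\<close>

lemma generated_add:
  assumes "x \<in> generated A" "y \<in> generated A"
  shows "x + y \<in> generated A"
  using assms by induction (auto simp: add.assoc intro: generated.intros)

lemma submonoid_generated: "submonoid (generated A)"
  by (auto simp: submonoid_def intro: generated.gen_zero generated_add)

lemma multiple_in_generated: "x \<in> A \<Longrightarrow> k * x \<in> generated A"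
  by (induction k) (auto intro: generated.intros)

lemma generated_3_iff:
  "x \<in> generated {p, q, r} \<longleftrightarrow> (\<exists>\<alpha> \<beta> \<gamma>. x = \<alpha> * p + \<beta> * q + \<gamma> * r)"
proof
  show "x \<in> generated {p, q, r} \<Longrightarrow> \<exists>\<alpha> \<beta> \<gamma>. x = \<alpha> * p + \<beta> * q + \<gamma> * r"
  proof (induction rule: generated.induct)
    case gen_zero
    then show ?case by (metis add_0 mult_0)
  next
    case (gen_add x y)
    then obtain \<alpha> \<beta> \<gamma> where "y = \<alpha> * p + \<beta> * q + \<gamma> * r" by blast
    with gen_add.hyps(1) show ?case
      by (metis (no_types, lifting) add.assoc add.left_commute empty_iff insert_iff mult_Suc)
  qed
  show "\<exists>\<alpha> \<beta> \<gamma>. x = \<alpha> * p + \<beta> * q + \<gamma> * r \<Longrightarrow> x \<in> generated {p, q, r}"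
    by (auto intro!: generated_add multiple_in_generated)
qed

lemma frobenius_eqI:
  assumes "F \<notin> S" "\<And>x. x \<notin> S \<Longrightarrow> x \<le> F"
  shows "frobenius S = int F"
proof -
  have "Max (UNIV - S) = F"
    using assms by (intro Max_eqI) (auto intro: finite_subset[of _ "{..F}"])
  then show ?thesis
    using assms(1) by (auto simp: frobenius_def)
qed

lemma numerical_semigroup_insert:
  assumes S: "numerical_semigroup S"
    and "h + h \<in> S" and "\<And>s. s \<in> S \<Longrightarrow> 0 < s \<Longrightarrow> h + s \<in> S"
  shows "numerical_semigroup (insert h S)"
proof -
  have "x + y \<in> insert h S" if "x \<in> insert h S" "y \<in> insert h S" for x y
  proof (cases "x = h")
    case True
    then show ?thesis
      using that assms by (cases "y = 0") (auto simp: numerical_semigroup_def submonoid_def)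
  next
    case False
    then have "x \<in> S" using that(1) by blast
    then show ?thesis
      using that(2) assms(3)[of x] S
      by (cases "x = 0") (auto simp: numerical_semigroup_def submonoid_def add.commute)
  qed
  moreover have "finite (UNIV - insert h S)"
    using S by (auto simp: numerical_semigroup_def intro: finite_subset[rotated])
  ultimately show ?thesis
    using S by (auto simp: numerical_semigroup_def submonoid_def)
qed

lemma irreducible_ns_imp_gap_dual:
  assumes irr: "irreducible_ns S" and F: "F \<notin> S" "\<And>x. x \<notin> S \<Longrightarrow> x \<le> F"
    and x: "x \<notin> S" "2 * x \<noteq> F"
  shows "F - x \<in> S"
proof (rule ccontr)
  have S: "numerical_semigroup S"
    using irr by (simp add: irreducible_ns_def)
  then have zero: "0 \<in> S" and add: "\<And>x y. x \<in> S \<Longrightarrow> y \<in> S \<Longrightarrow> x + y \<in> S"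
    by (auto simp: numerical_semigroup_def submonoid_def)
  have above_F: "y \<in> S" if "F < y" for y
    using F(2) that by (meson not_le)
  define G where "G = {x. x \<notin> S \<and> 2 * x \<noteq> F \<and> F - x \<notin> S}"
  assume "F - x \<notin> S"
  then have "x \<in> G" using x by (simp add: G_def)
  moreover have "finite G"
    using F(2) by (auto simp: G_def intro: finite_subset[of _ "{..F}"])
  ultimately obtain h where hG: "h \<in> G" and h_max: "\<And>y. y \<in> G \<Longrightarrow> y \<le> h"
    using Max_in Max_ge by blast
  have "h \<le> F" using hG F(2) by (simp add: G_def)
  then have "F - h \<in> G" using hG by (auto simp: G_def)
  then have "F < h + h" using h_max[of "F - h"] hG by (auto simp: G_def)
  have "h \<noteq> F" using hG zero by (auto simp: G_def)
  \<comment> \<open>Maximality of \<open>h\<close> in \<open>G\<close> makes it a special gap: adjoining it to \<open>S\<close> keeps a semigroup.\<close>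
  have "h + s \<in> S" if "s \<in> S" "0 < s" for s
  proof (rule ccontr)
    assume hs: "h + s \<notin> S"
    then have "h + s \<le> F" using F(2) by blast
    have "F - (h + s) + s = F - h" using \<open>h + s \<le> F\<close> by simp
    then have "F - (h + s) \<notin> S"
      using hG add[OF _ that(1)] by (metis (mono_tags) G_def mem_Collect_eq)
    then have "h + s \<in> G" using hs \<open>F < h + h\<close> by (simp add: G_def)
    then show False using h_max that(2) by fastforce
  qed
  then have "numerical_semigroup (insert h S)"
    using S above_F \<open>F < h + h\<close> by (intro numerical_semigroup_insert) auto
  moreover have "numerical_semigroup (insert F S)"
  proof -
    have "0 < F" using zero F(1) by (metis gr_zeroI)
    then show ?thesis using S above_F by (intro numerical_semigroup_insert) auto
  qed
  moreover have "S \<subset> insert h S" "S \<subset> insert F S" "S = insert h S \<inter> insert F S"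
    using hG F(1) \<open>h \<noteq> F\<close> by (auto simp: G_def)
  ultimately show False using irr by (auto simp: irreducible_ns_def)
qed

lemma gap_dual_imp_irreducible_ns:
  assumes S: "numerical_semigroup S" and F: "F \<notin> S" "\<And>x. x \<notin> S \<Longrightarrow> x \<le> F"
    and dual: "\<And>x. x \<notin> S \<Longrightarrow> 2 * x \<noteq> F \<Longrightarrow> F - x \<in> S"
  shows "irreducible_ns S"
proof -
  have "F \<in> T" if T: "numerical_semigroup T" "S \<subset> T" for T
  proof -
    have add: "\<And>x y. x \<in> T \<Longrightarrow> y \<in> T \<Longrightarrow> x + y \<in> T"
      using T(1) by (auto simp: numerical_semigroup_def submonoid_def)
    obtain x where x: "x \<in> T" "x \<notin> S" using T(2) by blast
    show "F \<in> T"
    proof (cases "2 * x = F")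
      case True
      then show ?thesis using add[OF x(1) x(1)] by (simp add: mult_2)
    next
      case False
      then have "x + (F - x) \<in> T" using add x dual T(2) by blast
      then show ?thesis using F(2)[OF x(2)] by simp
    qed
  qed
  then show ?thesis using S F(1) by (auto simp: irreducible_ns_def)
qed

lemma pseudo_symmetric_iff_gap_dual:
  assumes "numerical_semigroup S" "F \<notin> S" "\<And>x. x \<notin> S \<Longrightarrow> x \<le> F"
  shows "pseudo_symmetric S \<longleftrightarrow>
    even F \<and> (\<forall>x. x \<notin> S \<longrightarrow> 2 * x \<noteq> F \<longrightarrow> F - x \<in> S)"
  using assms irreducible_ns_imp_gap_dual gap_dual_imp_irreducible_ns frobenius_eqI[of F S]
  by (auto simp: pseudo_symmetric_def)

lemma mult_add_double_eq_mult_add_pred: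
  fixes m u v i :: nat
  assumes "m * u + 2 * i = m * v + (m - 1)" "i < m"
  shows "u = v \<and> 2 * i = m - 1"
proof -
  have "\<not> v < u"
  proof
    assume "v < u"
    then have "m * (v + 1) \<le> m * u" by (intro mult_le_mono2) simp
    then show False using assms by simp
  qed
  moreover have "\<not> u < v"
  proof
    assume "u < v"
    then have "m * (u + 1) \<le> m * v" by (intro mult_le_mono2) simp
    then show False using assms by simp
  qed
  ultimately show ?thesis using assms by simp
qed

definition kunz_frobenius :: "nat \<Rightarrow> (nat \<Rightarrow> nat) \<Rightarrow> nat" where
  "kunz_frobenius m K = m * (K (m - 1) - 1) + (m - 1)"

definition kunz_pseudo_symmetric :: "nat \<Rightarrow> (nat \<Rightarrow> nat) \<Rightarrow> bool" where
  "kunz_pseudo_symmetric m K \<longleftrightarrow> even (kunz_frobenius m K) \<and>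
     (\<forall>i\<in>{1..<m}. K i + K (m - 1 - i) \<le> K (m - 1) \<or> (2 * i = m - 1 \<and> 2 * K i = K (m - 1) + 1))"

locale kunz_coordinates =
  fixes S :: "nat set" and m :: nat and K :: "nat \<Rightarrow> nat"
  assumes m_pos: "0 < m"
    and K_zero: "K 0 = 0"
    and mem_iff: "x \<in> S \<longleftrightarrow> K (x mod m) \<le> x div m"
    and K_le_last: "i < m \<Longrightarrow> K i \<le> K (m - 1)"
    and K_last_pos: "0 < K (m - 1)"
begin

lemma mult_add_mem_iff: "r < m \<Longrightarrow> m * q + r \<in> S \<longleftrightarrow> K r \<le> q"
  by (simp add: mem_iff)

lemma frobenius_notin: "kunz_frobenius m K \<notin> S"
  using mult_add_mem_iff[of "m - 1" "K (m - 1) - 1"] m_pos K_last_pos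
  by (simp add: kunz_frobenius_def)

lemma gap_le_frobenius:
  assumes "x \<notin> S"
  shows "x \<le> kunz_frobenius m K"
proof -
  have "x div m < K (m - 1)"
    using assms K_le_last[of "x mod m"] m_pos by (simp add: mem_iff)
  then have "m * (x div m) \<le> m * (K (m - 1) - 1)" by (intro mult_le_mono2) linarith
  moreover have "x mod m \<le> m - 1" using m_pos mod_less_divisor[of m x] by linarith
  ultimately show ?thesis
    unfolding kunz_frobenius_def by (metis add_le_mono mult_div_mod_eq)
qed

lemma frobenius_minus:
  assumes "r < m" "q < K (m - 1)"
  shows "kunz_frobenius m K - (m * q + r) = m * (K (m - 1) - 1 - q) + (m - 1 - r)"
proof -
  obtain d where "K (m - 1) - 1 = q + d"
    using assms(2) by (metis less_imp_Suc_add diff_Suc_1 add_Suc_right)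
  then show ?thesis using assms(1) by (simp add: kunz_frobenius_def algebra_simps)
qed

lemma exceptional_index_if_gap_dual:
  assumes dual: "\<And>x. x \<notin> S \<Longrightarrow> 2 * x \<noteq> kunz_frobenius m K \<Longrightarrow> kunz_frobenius m K - x \<in> S"
    and i: "i < m" and exceeds: "K (m - 1) < K i + K (m - 1 - i)"
  shows "2 * i = m - 1 \<and> 2 * K i = K (m - 1) + 1"
proof -
  have "K (m - 1 - i) \<le> K (m - 1)" using K_le_last m_pos by simp
  then have Ki: "0 < K i" using exceeds by simp
  define x where "x = m * (K i - 1) + i"
  have "x \<notin> S" using mult_add_mem_iff[OF i] Ki by (simp add: x_def)
  moreover have "kunz_frobenius m K - x \<notin> S"
    using frobenius_minus[OF i, of "K i - 1"] K_le_last[OF i] mult_add_mem_iff[of "m - 1 - i"]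
      Ki exceeds m_pos
    by (simp add: x_def)
  ultimately have "2 * x = kunz_frobenius m K" using dual by blast
  then have "m * (2 * (K i - 1)) + 2 * i = m * (K (m - 1) - 1) + (m - 1)"
    by (simp add: x_def kunz_frobenius_def algebra_simps)
  from mult_add_double_eq_mult_add_pred[OF this i] show ?thesis using Ki K_last_pos by arith
qed

lemma gap_dual_if_kunz_inequalities:
  assumes cond: "\<And>i. 1 \<le> i \<Longrightarrow> i < m \<Longrightarrow>
      K i + K (m - 1 - i) \<le> K (m - 1) \<or> (2 * i = m - 1 \<and> 2 * K i = K (m - 1) + 1)"
    and x: "x \<notin> S" "2 * x \<noteq> kunz_frobenius m K"
  shows "kunz_frobenius m K - x \<in> S"
proof -
  define q r where "q = x div m" and "r = x mod m"
  have x_eq: "x = m * q + r" and r: "r < m" using m_pos by (simp_all add: q_def r_def)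
  have q: "q < K r" using x mult_add_mem_iff[OF r] by (simp add: x_eq)
  then have r1: "1 \<le> r" using K_zero by (cases r) auto
  have Fx: "kunz_frobenius m K - x = m * (K (m - 1) - 1 - q) + (m - 1 - r)"
    using frobenius_minus[OF r] q K_le_last[OF r] by (simp add: x_eq)
  from cond[OF r1 r] show ?thesis
  proof
    assume "K r + K (m - 1 - r) \<le> K (m - 1)"
    then show ?thesis unfolding Fx using mult_add_mem_iff[of "m - 1 - r"] q m_pos by simp
  next
    assume e: "2 * r = m - 1 \<and> 2 * K r = K (m - 1) + 1"
    have "q \<noteq> K r - 1"
    proof
      assume "q = K r - 1"
      then have "2 * x = m * (2 * K r - 2) + 2 * r" by (simp add: x_eq algebra_simps)
      also have "\<dots> = kunz_frobenius m K" using e by (simp add: kunz_frobenius_def)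
      finally show False using x(2) by simp
    qed
    then have "K r \<le> K (m - 1) - 1 - q" using q e by arith
    moreover have "m - 1 - r = r" using e by arith
    ultimately show ?thesis unfolding Fx using mult_add_mem_iff[OF r] by simp
  qed
qed

lemma pseudo_symmetric_iff_kunz:
  assumes "submonoid S"
  shows "pseudo_symmetric S \<longleftrightarrow> kunz_pseudo_symmetric m K"
proof -
  have "numerical_semigroup S"
    using assms gap_le_frobenius
    by (auto simp: numerical_semigroup_def intro: finite_subset[of _ "{..kunz_frobenius m K}"])
  then have "pseudo_symmetric S \<longleftrightarrow> even (kunz_frobenius m K) \<and>
      (\<forall>x. x \<notin> S \<longrightarrow> 2 * x \<noteq> kunz_frobenius m K \<longrightarrow> kunz_frobenius m K - x \<in> S)"
    using frobenius_notin gap_le_frobenius by (rule pseudo_symmetric_iff_gap_dual)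
  also have "\<dots> \<longleftrightarrow> kunz_pseudo_symmetric m K"
    unfolding kunz_pseudo_symmetric_def
    using exceptional_index_if_gap_dual gap_dual_if_kunz_inequalities
    by (meson atLeastLessThan_iff not_le)
  finally show ?thesis .
qed

end

definition mans_kunz :: "nat \<Rightarrow> nat \<Rightarrow> nat \<Rightarrow> nat \<Rightarrow> nat" where
  "mans_kunz a b t i = (i div t) * b + (i mod t) * a"

lemma mans_kunz_div_mod: "r < t \<Longrightarrow> mans_kunz a b t (q * t + r) = q * b + r * a"
  by (simp add: mans_kunz_def)

lemma mans_kunz_apery:
  "m * mans_kunz a b t i + i = (i div t) * (b * m + t) + (i mod t) * (a * m + 1)"
proof -
  have "i = (i div t) * t + i mod t" by simp
  then show ?thesis by (simp add: mans_kunz_def algebra_simps)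
qed

lemma mono_mans_kunz:
  assumes "0 < t" "(t - 1) * a \<le> b"
  shows "mono (mans_kunz a b t)"
proof (rule mono_iff_le_Suc[THEN iffD2], rule allI)
  fix i
  define q r where "q = i div t" and "r = i mod t"
  have i: "i = q * t + r" and "r < t" using assms(1) by (simp_all add: q_def r_def)
  show "mans_kunz a b t i \<le> mans_kunz a b t (Suc i)"
  proof (cases "Suc r = t")
    case True
    then have "Suc i = Suc q * t + 0" using i by simp
    then have "mans_kunz a b t (Suc i) = q * b + b"
      using mans_kunz_div_mod[OF assms(1), where q = "Suc q"] by simp
    moreover have "mans_kunz a b t i = q * b + (t - 1) * a"
      using mans_kunz_div_mod[OF \<open>r < t\<close>, where q = q] True i by (metis diff_Suc_1)
    ultimately show ?thesis using assms(2) by simp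
  next
    case False
    then have "Suc r < t" using \<open>r < t\<close> by simp
    have "Suc i = q * t + Suc r" using i by simp
    then show ?thesis
      using mans_kunz_div_mod[OF \<open>r < t\<close>, where q = q]
        mans_kunz_div_mod[OF \<open>Suc r < t\<close>, where q = q] i
      by simp
  qed
qed

lemma mans_kunz_add_mult_le:
  assumes "b \<le> t * a"
  shows "mans_kunz a b t (\<beta> + \<gamma> * t) \<le> \<beta> * a + \<gamma> * b"
proof -
  have "(\<beta> div t) * b \<le> (\<beta> div t) * (t * a)" using assms by simp
  moreover have "\<beta> * a = (\<beta> div t) * (t * a) + (\<beta> mod t) * a"
    by (metis div_mult_mod_eq distrib_right mult.assoc mult.commute)
  ultimately show ?thesis
    by (cases "t = 0") (simp_all add: mans_kunz_def algebra_simps)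
qed

lemma mem_generated_mans_iff:
  assumes "0 < m" "0 < t" "(t - 1) * a \<le> b" "b \<le> t * a"
  shows "x \<in> generated {m, a * m + 1, b * m + t} \<longleftrightarrow> mans_kunz a b t (x mod m) \<le> x div m"
proof
  assume "x \<in> generated {m, a * m + 1, b * m + t}"
  then obtain \<alpha> \<beta> \<gamma> where "x = \<alpha> * m + \<beta> * (a * m + 1) + \<gamma> * (b * m + t)"
    unfolding generated_3_iff by blast
  then have x: "x = m * (\<alpha> + \<beta> * a + \<gamma> * b) + (\<beta> + \<gamma> * t)"
    by (simp add: algebra_simps)
  have "mans_kunz a b t (x mod m) = mans_kunz a b t ((\<beta> + \<gamma> * t) mod m)"
    by (simp add: x)
  also have "\<dots> \<le> mans_kunz a b t (\<beta> + \<gamma> * t)"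
    using mono_mans_kunz[OF assms(2,3)] by (simp add: monoD)
  also have "\<dots> \<le> \<beta> * a + \<gamma> * b"
    using assms(4) by (rule mans_kunz_add_mult_le)
  also have "\<dots> \<le> x div m"
    using assms(1) by (simp add: x)
  finally show "mans_kunz a b t (x mod m) \<le> x div m" .
next
  assume le: "mans_kunz a b t (x mod m) \<le> x div m"
  have "x = m * (x div m - mans_kunz a b t (x mod m)) + (m * mans_kunz a b t (x mod m) + x mod m)"
    using le by (simp add: algebra_simps)
  then have "x = (x div m - mans_kunz a b t (x mod m)) * m
      + ((x mod m) mod t) * (a * m + 1) + ((x mod m) div t) * (b * m + t)"
    by (simp only: mans_kunz_apery) (simp add: algebra_simps)
  then show "x \<in> generated {m, a * m + 1, b * m + t}"
    unfolding generated_3_iff by blast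
qed

lemma odd_kunz_frobenius_mans:
  assumes "0 < t" "t dvd m" "0 < mans_kunz a b t (m - 1)"
  shows "odd (kunz_frobenius m (mans_kunz a b t))"
proof -
  obtain c where m: "m = c * t" using assms(2) by (metis dvd_def mult.commute)
  have "0 < c" using assms(3) m by (cases c) (simp_all add: mans_kunz_def)
  then have "m - 1 = (c - 1) * t + (t - 1)" using m assms(1) by (cases c) (simp_all add: algebra_simps)
  then have last: "mans_kunz a b t (m - 1) = (c - 1) * b + (t - 1) * a"
    using mans_kunz_div_mod[of "t - 1" t] assms(1) by simp
  show ?thesis
  proof (cases "even m")
    case True
    then show ?thesis using \<open>0 < c\<close> assms(1) m by (simp add: kunz_frobenius_def)
  next
    case False
    then have "even (c - 1)" "even (t - 1)" using m \<open>0 < c\<close> assms(1) by simp_all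
    then have "even (mans_kunz a b t (m - 1))" using last by simp
    then have "odd (mans_kunz a b t (m - 1) - 1)" using assms(3) by (simp add: odd_pos even_diff_nat)
    then show ?thesis using False \<open>0 < c\<close> assms(1) m by (simp add: kunz_frobenius_def)
  qed
qed

lemma kunz_pseudo_symmetric_mans_imp:
  assumes t: "2 \<le> t" "t < m" and b: "(t - 1) * a \<le> b" "b < t * a"
    and ps: "kunz_pseudo_symmetric m (mans_kunz a b t)"
  shows "2 * t = m + 1 \<and> t * a = b + 1"
proof -
  let ?K = "mans_kunz a b t"
  define Q R where "Q = (m - 1) div t" and "R = (m - 1) mod t"
  have m: "m - 1 = Q * t + R" and "R < t" using t by (simp_all add: Q_def R_def)
  have "1 \<le> Q" using t by (simp add: Q_def Suc_le_eq div_greater_zero_iff)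
  have last: "?K (m - 1) = Q * b + R * a" using mans_kunz_div_mod[OF \<open>R < t\<close>] m by simp
  have "0 < b" using b t by (cases a) auto
  have "\<not> t dvd m"
  proof
    assume "t dvd m"
    moreover have "0 < ?K (m - 1)" using last \<open>1 \<le> Q\<close> \<open>0 < b\<close> by (simp add: add_pos_nonneg)
    ultimately show False
      using odd_kunz_frobenius_mans ps t by (simp add: kunz_pseudo_symmetric_def)
  qed
  have "R \<noteq> t - 1"
  proof
    assume "R = t - 1"
    then have "m = Suc Q * t" using m t by simp
    then show False using \<open>\<not> t dvd m\<close> by simp
  qed
  then have "R + 2 \<le> t" using \<open>R < t\<close> by linarith
  obtain Q' where Q: "Q = Suc Q'" using \<open>1 \<le> Q\<close> by (cases Q) auto
  define i where "i = R + 1"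
  \<comment> \<open>The residues \<open>i\<close> and \<open>m - 1 - i\<close> add up with a carry past a multiple of \<open>t\<close>,
    so their coordinates overshoot \<open>K (m - 1)\<close> by \<open>t a - b > 0\<close>.\<close>
  have Ki: "?K i = (R + 1) * a"
    using mans_kunz_div_mod[of i t a b 0] \<open>R + 2 \<le> t\<close> by (simp add: i_def)
  have "m - 1 - i = Q' * t + (t - 1)"
    using m Q \<open>R + 2 \<le> t\<close> by (simp add: i_def algebra_simps)
  then have Kj: "?K (m - 1 - i) = Q' * b + (t - 1) * a"
    using mans_kunz_div_mod[of "t - 1" t] t by simp
  have "t * a = (t - 1) * a + a" using t by (cases t) auto
  then have "?K (m - 1) < ?K i + ?K (m - 1 - i)"
    using b(2) unfolding Ki Kj last Q by (simp add: algebra_simps)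
  moreover have "i \<in> {1..<m}"
    using m Q \<open>R + 2 \<le> t\<close> by (simp add: i_def)
  ultimately have e: "2 * i = m - 1" "2 * ?K i = ?K (m - 1) + 1"
    using ps unfolding kunz_pseudo_symmetric_def by (meson not_le)+
  then have "Q * t = R + 2" using m by (simp add: i_def)
  then have "Q * t \<le> 1 * t" using \<open>R + 2 \<le> t\<close> by simp
  then have "Q = 1" using \<open>1 \<le> Q\<close> t by simp
  then have "t = R + 2" using \<open>Q * t = R + 2\<close> by simp
  then show ?thesis using e m Ki last \<open>Q = 1\<close> \<open>t < m\<close> by (simp add: i_def algebra_simps)
qed

lemma kunz_pseudo_symmetric_mans:
  assumes "2 \<le> t" "2 * t = m + 1" "t * a = b + 1"
  shows "kunz_pseudo_symmetric m (mans_kunz a b t)"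
proof -
  let ?K = "mans_kunz a b t"
  obtain s where t: "t = s + 2" using assms(1) by (metis add.commute le_Suc_ex)
  have m: "m = 2 * s + 3" and b: "b + 1 = (s + 2) * a" using assms t by simp_all
  have "m - 1 = 1 * t + s" using m t by simp
  then have last: "?K (m - 1) = 1 * b + s * a" by (simp only:) (rule mans_kunz_div_mod, simp add: t)
  have "?K (m - 1) + 1 = 2 * ((s + 1) * a)" using last b by (simp add: algebra_simps)
  then have "?K (m - 1) - 1 = 2 * ((s + 1) * a - 1)" by linarith
  then have "even (?K (m - 1) - 1)" by simp
  then have "even (kunz_frobenius m ?K)" using m by (simp add: kunz_frobenius_def)
  moreover have "?K i + ?K (m - 1 - i) \<le> ?K (m - 1) \<or> (2 * i = m - 1 \<and> 2 * ?K i = ?K (m - 1) + 1)"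
    if i: "1 \<le> i" "i < m" for i
  proof -
    consider "i \<le> s" | "i = s + 1" | "s + 2 \<le> i" by linarith
    then show ?thesis
    proof cases
      case 1
      have "s - i < t" "i < t" using t 1 by simp_all
      moreover have "m - 1 - i = 1 * t + (s - i)" using m t 1 by simp
      ultimately have "?K i + ?K (m - 1 - i) = b + (i + (s - i)) * a"
        using mans_kunz_div_mod[of i t a b 0] mans_kunz_div_mod[of "s - i" t a b 1]
        by (simp add: algebra_simps)
      then show ?thesis using 1 last by simp
    next
      case 2
      then have "?K i = (s + 1) * a" using mans_kunz_div_mod[of i t a b 0] t by simp
      then show ?thesis using 2 m last b by (simp add: algebra_simps)
    next
      case 3
      define j k where "j = i - t" and "k = m - 1 - i"
      have "j < t" "i = 1 * t + j" "k < t" using 3 t i m by (simp_all add: j_def k_def)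
      moreover have "s = j + k" using m t 3 i by (simp add: j_def k_def)
      ultimately have "?K i + ?K k = b + s * a"
        using mans_kunz_div_mod[of j t a b 1] mans_kunz_div_mod[of k t a b 0]
        by (simp add: algebra_simps)
      then show ?thesis using last by (simp add: k_def)
    qed
  qed
  ultimately show ?thesis by (simp add: kunz_pseudo_symmetric_def)
qed

lemma pseudo_symmetric_generated_mans_iff:
  assumes t: "2 \<le> t" "t < m" and b: "(t - 1) * a \<le> b" "b < t * a"
  shows "pseudo_symmetric (generated {m, a * m + 1, b * m + t}) \<longleftrightarrow> 2 * t = m + 1 \<and> t * a = b + 1"
proof -
  have "mans_kunz a b t 1 \<le> mans_kunz a b t (m - 1)"
    using mono_mans_kunz[of t a b] t b by (simp add: monoD)
  moreover have "mans_kunz a b t 1 = a" using t by (simp add: mans_kunz_def)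
  moreover have "0 < a" using b(2) by (cases a) simp_all
  ultimately have "0 < mans_kunz a b t (m - 1)" by simp
  then interpret kunz_coordinates "generated {m, a * m + 1, b * m + t}" m "mans_kunz a b t"
  proof unfold_locales
    show "x \<in> generated {m, a * m + 1, b * m + t} \<longleftrightarrow> mans_kunz a b t (x mod m) \<le> x div m" for x
      using t b by (intro mem_generated_mans_iff) simp_all
    show "i < m \<Longrightarrow> mans_kunz a b t i \<le> mans_kunz a b t (m - 1)" for i
      using mono_mans_kunz[of t a b] t b by (simp add: monoD)
  qed (use t \<open>0 < mans_kunz a b t (m - 1)\<close> in \<open>simp_all add: mans_kunz_def\<close>)
  show ?thesis
    using pseudo_symmetric_iff_kunz[OF submonoid_generated]
      kunz_pseudo_symmetric_mans_imp[OF t b] kunz_pseudo_symmetric_mans[OF t(1)]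
    by blast
qed

lemma mans_parameter_bounds:
  fixes m a b t :: nat
  assumes "0 < m" "(t - 1) * (a * m + 1) < b * m + t" "b * m + t < t * (a * m + 1)"
  shows "(t - 1) * a \<le> b" "b < t * a"
proof -
  show "b < t * a"
    using assms(3) by (simp add: algebra_simps)
  show "(t - 1) * a \<le> b"
  proof (rule ccontr)
    assume "\<not> (t - 1) * a \<le> b"
    then have "(b + 1) * m \<le> (t - 1) * a * m" by (intro mult_le_mono1) simp
    then show False using assms(1,2) by (simp add: algebra_simps)
  qed
qed

theorem proposition3p25:
  fixes m a b t :: nat
  assumes "m \<ge> 3" and "a \<ge> 1" and "2 \<le> t" and "t \<le> m - 1"
    and "(t - 1) * (a * m + 1) < b * m + t" and "b * m + t < t * (a * m + 1)"
  shows "pseudo_symmetric (generated {m, a * m + 1, b * m + t}) \<longleftrightarrow>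
         (real t = (real m + 1) / 2 \<and> real t = (real b + 1) / real a)"
proof -
  have "t < m" using assms by simp
  moreover have "(t - 1) * a \<le> b" "b < t * a"
    using mans_parameter_bounds[OF _ assms(5,6)] \<open>t < m\<close> by simp_all
  moreover have "real t = (real m + 1) / 2 \<longleftrightarrow> real (2 * t) = real (m + 1)"
    by (auto simp: field_simps)
  moreover have "real t = (real b + 1) / real a \<longleftrightarrow> real (t * a) = real (b + 1)"
    using assms(2) by (auto simp: field_simps)
  ultimately show ?thesis
    using pseudo_symmetric_generated_mans_iff assms(3) by (simp only: of_nat_eq_iff)
qed

end
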